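(* Let $\alpha=(\alpha_1,\dots,\alpha_s)\in\mathbb{K}_s$ and let $1\le i<j\le s$. Then $\alpha^i=-\overline{\alpha^j}$ (as tuples) if and only if $\alpha$ is symmetric and $i+j=s+1$.
   Context: $\mathbb{K}_s=\{(\alpha_1,\dots,\alpha_s)\in\mathbb{Z}^s:\ \alpha_k\alpha_{k+1}<0 \text{ for all } 1\le k\le s-1\}$, with all entries nonzero. For $\beta=(\beta_1,\dots,\beta_s)\in\mathbb{Z}^s$, $-\beta=(-\beta_1,\dots,-\beta_s)$ and $\overline{\beta}=(\beta_s,\dots,\beta_1)$; $\beta$ is symmetric if $\beta=-\overline{\beta}$. For $1\le i\le s$, $\alpha^i=(\alpha_1,\dots,\alpha_{i-1},\alpha_i*1,\alpha_{i+1},\dots,\alpha_s)$, where $\alpha_i*1=\alpha_i-1$ if $\alpha_i>0$ and $\alpha_i*1=\alpha_i+1$ otherwise. *)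

theory Defs
  imports Main
begin

(* Tuples (alpha_1,...,alpha_s) are represented as int lists of length s;
   alpha_k is  a ! (k-1). *)

definition K :: "nat \<Rightarrow> int list set" where
  "K s = {a. length a = s \<and> (\<forall>k<s. a ! k \<noteq> 0) \<and>
             (\<forall>k. 1 \<le> k \<and> k \<le> s - 1 \<longrightarrow> a ! (k-1) * a ! k < 0)}"

definition neg :: "int list \<Rightarrow> int list" where
  "neg b = map uminus b"

definition bar :: "int list \<Rightarrow> int list" where
  "bar b = rev b"

definition symmetric :: "int list \<Rightarrow> bool" where
  "symmetric b \<longleftrightarrow> b = neg (bar b)"

definition star1 :: "int \<Rightarrow> int" where
  "star1 x = (if x > 0 then x - 1 else x + 1)"

definition sup_i :: "int list \<Rightarrow> nat \<Rightarrow> int list" where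
  "sup_i a i = a[i - 1 := star1 (a ! (i - 1))]"

end

theory Submission
  imports Defs
begin

(* Reflecting with neg o bar commutes with shrinking an entry:
   -bar(alpha^j) = (-bar alpha)^(s+1-j). This gives the "if" direction at once.
   If i + j <> s + 1, compare position i with its mirror r = s + 1 - i: the left side
   changes only entry i, the right side neither entry i nor entry r, which forces
   alpha_i * 1 = -alpha_i (if r = i) or alpha_i * 1 = alpha_i, both impossible.
   So i + j = s + 1 and alpha^i = (-bar alpha)^i. Then alpha and -bar alpha agree away
   from i; both alternate in sign, so they also have the same sign at i, and * 1 is
   injective on nonzero integers of a fixed sign. *)

lemma star1_neq_self: "x \<noteq> 0 \<Longrightarrow> star1 x \<noteq> x"
  by (simp add: star1_def)

lemma star1_neq_uminus: "x \<noteq> 0 \<Longrightarrow> star1 x \<noteq> - x"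
  by (simp add: star1_def)

lemma star1_uminus: "x \<noteq> 0 \<Longrightarrow> star1 (- x) = - star1 x"
  by (simp add: star1_def)

lemma star1_inj_same_sgn:
  "x \<noteq> 0 \<Longrightarrow> sgn x = sgn y \<Longrightarrow> star1 x = star1 y \<Longrightarrow> x = y"
  by (auto simp: star1_def sgn_if split: if_splits)

lemma length_neg_bar [simp]: "length (neg (bar c)) = length c"
  by (simp add: neg_def bar_def)

lemma nth_neg_bar: "k < length c \<Longrightarrow> neg (bar c) ! k = - c ! (length c - 1 - k)"
  by (simp add: neg_def bar_def rev_nth)

lemma length_sup_i [simp]: "length (sup_i a i) = length a"
  by (simp add: sup_i_def)

lemma nth_sup_i:
  "k < length a \<Longrightarrow> sup_i a i ! k = (if k = i - 1 then star1 (a ! k) else a ! k)"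
  by (auto simp: sup_i_def nth_list_update)

lemma neg_bar_sup_i:
  assumes "1 \<le> j" "j \<le> length a" "a ! (j - 1) \<noteq> 0"
  shows "neg (bar (sup_i a j)) = sup_i (neg (bar a)) (length a + 1 - j)"
proof -
  have "neg (bar a) ! (length a - j) = - a ! (j - 1)"
    using assms by (simp add: nth_neg_bar)
  moreover have "length a - (j - 1) - 1 = length a + 1 - j - 1"
    using assms by simp
  ultimately show ?thesis
    using assms by (simp add: sup_i_def neg_def bar_def map_update rev_update star1_uminus)
qed

lemma K_nth_nonzero: "a \<in> K s \<Longrightarrow> k < s \<Longrightarrow> a ! k \<noteq> 0"
  by (simp add: K_def)

lemma neg_bar_K: assumes "a \<in> K s" shows "neg (bar a) \<in> K s"
proof -
  have len: "length a = s" and alt: "\<And>k. 1 \<le> k \<Longrightarrow> k \<le> s - 1 \<Longrightarrow> a ! (k - 1) * a ! k < 0"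
    using assms by (auto simp: K_def)
  have "neg (bar a) ! (k - 1) * neg (bar a) ! k < 0" if "1 \<le> k" "k \<le> s - 1" for k
  proof -
    have "neg (bar a) ! (k - 1) * neg (bar a) ! k = a ! (s - k - 1) * a ! (s - k)"
      using that len by (simp add: nth_neg_bar Suc_diff_Suc)
    also have "\<dots> < 0"
      using alt[of "s - k"] that by simp
    finally show ?thesis .
  qed
  moreover have "neg (bar a) ! k \<noteq> 0" if "k < s" for k
    using that len K_nth_nonzero[OF assms, of "s - 1 - k"] by (simp add: nth_neg_bar)
  ultimately show ?thesis
    using len by (simp add: K_def)
qed

lemma K_sgn_nth:
  assumes "a \<in> K s" "l < s"
  shows "sgn (a ! l) = (-1) ^ l * sgn (a ! 0)"
  using assms(2)
proof (induction l)
  case (Suc l)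
  have "a ! l * a ! Suc l < 0"
    using assms(1) Suc.prems by (auto simp: K_def elim!: allE[of _ "Suc l"])
  then have "sgn (a ! Suc l) = - sgn (a ! l)"
    by (auto simp: mult_less_0_iff sgn_if)
  then show ?case
    using Suc by simp
qed simp

lemma K_sgn_agree:
  assumes "a \<in> K s" "b \<in> K s" "k < s" "l < s" "sgn (a ! k) = sgn (b ! k)"
  shows "sgn (a ! l) = sgn (b ! l)"
proof -
  have "sgn (a ! 0) = sgn (b ! 0)"
    using assms K_sgn_nth[of a s k] K_sgn_nth[of b s k] by simp
  then show ?thesis
    using assms K_sgn_nth[of a s l] K_sgn_nth[of b s l] by simp
qed

lemma K_sup_i_eq_sup_i_iff:
  assumes "a \<in> K s" "b \<in> K s" "1 \<le> i" "i \<le> s" "2 \<le> s"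
  shows "sup_i a i = sup_i b i \<longleftrightarrow> a = b"
proof
  assume eq: "sup_i a i = sup_i b i"
  have len: "length a = s" "length b = s"
    using assms by (auto simp: K_def)
  have off_i: "a ! k = b ! k" if "k < s" "k \<noteq> i - 1" for k
    using eq[THEN arg_cong, of "\<lambda>c. c ! k"] that len by (simp add: nth_sup_i)
  define k :: nat where "k = (if i = 1 then 1 else 0)"
  have k: "k < s" "k \<noteq> i - 1"
    using assms by (auto simp: k_def)
  have "sgn (a ! (i - 1)) = sgn (b ! (i - 1))"
    using K_sgn_agree[OF assms(1,2) k(1), of "i - 1"] off_i[OF k] assms by simp
  moreover have "star1 (a ! (i - 1)) = star1 (b ! (i - 1))"
    using eq[THEN arg_cong, of "\<lambda>c. c ! (i - 1)"] assms len by (simp add: nth_sup_i)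
  moreover have "a ! (i - 1) \<noteq> 0"
    using K_nth_nonzero[OF assms(1), of "i - 1"] assms by simp
  ultimately have at_i: "a ! (i - 1) = b ! (i - 1)"
    using star1_inj_same_sgn by blast
  show "a = b"
  proof (rule nth_equalityI)
    fix k assume "k < length a"
    then show "a ! k = b ! k"
      using off_i len at_i by (cases "k = i - 1") auto
  qed (simp add: len)
qed simp

lemma sup_i_neq_neg_bar_sup_i:
  assumes nz: "\<And>k. k < length a \<Longrightarrow> a ! k \<noteq> 0"
    and ij: "1 \<le> i" "i \<le> length a" "1 \<le> j" "j \<le> length a" "i \<noteq> j" "i + j \<noteq> length a + 1"
  shows "sup_i a i \<noteq> neg (bar (sup_i a j))"
proof
  assume eq: "sup_i a i = neg (bar (sup_i a j))"
  define p where "p = i - 1"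
  define r where "r = length a - 1 - p"
  have at: "sup_i a i ! k = neg (bar (sup_i a j)) ! k" if "k < length a" for k
    using eq by simp
  have p: "p < length a" "p \<noteq> j - 1" and r: "r < length a" "r \<noteq> j - 1" "length a - 1 - r = p"
    using ij by (auto simp: p_def r_def)
  have star_p: "star1 (a ! p) = - a ! r"
    using at[of p] p r by (simp add: nth_sup_i nth_neg_bar p_def r_def)
  show False
  proof (cases "r = p")
    case True
    then show False
      using star_p star1_neq_uminus[OF nz[OF p(1)]] by simp
  next
    case False
    then have "a ! r = - a ! p"
      using at[of r] p r by (simp add: nth_sup_i nth_neg_bar p_def)
    then show False
      using star_p star1_neq_self[OF nz[OF p(1)]] by simp
  qed
qed

theorem lemma1:
  fixes a :: "int list" and s i j :: nat
  assumes "a \<in> K s" and "1 \<le> i" and "i < j" and "j \<le> s"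
  shows "sup_i a i = neg (bar (sup_i a j)) \<longleftrightarrow> symmetric a \<and> i + j = s + 1"
proof -
  have len: "length a = s" and nz: "\<And>k. k < s \<Longrightarrow> a ! k \<noteq> 0"
    using assms(1) by (auto simp: K_def)
  have reflect: "neg (bar (sup_i a j)) = sup_i (neg (bar a)) (s + 1 - j)"
    using neg_bar_sup_i[of j a] assms len nz by simp
  show ?thesis
  proof
    assume eq: "sup_i a i = neg (bar (sup_i a j))"
    have ij: "i + j = s + 1"
      using sup_i_neq_neg_bar_sup_i[of a i j] eq assms len nz by fastforce
    then have "s + 1 - j = i"
      by simp
    then have "sup_i a i = sup_i (neg (bar a)) i"
      using eq reflect by simp
    then have "a = neg (bar a)"
      using K_sup_i_eq_sup_i_iff[OF assms(1) neg_bar_K[OF assms(1)]] assms by simp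
    then show "symmetric a \<and> i + j = s + 1"
      using ij by (simp add: symmetric_def)
  next
    assume "symmetric a \<and> i + j = s + 1"
    then have "neg (bar a) = a" and "s + 1 - j = i"
      by (auto simp: symmetric_def)
    then show "sup_i a i = neg (bar (sup_i a j))"
      using reflect by simp
  qed
qed

end
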